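(* Let $G=(V,E)$ be a graph with at least one edge, clique number $\omega$ and clique distance $\sigma$. Let $\mathcal{C}^*$ be a clique cover of $G$ minimizing $\|\mathcal{C}^*\|$ among all clique covers of $G$, and let $\mathcal{C}$ be any family produced by the $\sigma$-succinct construction on $G$. Then $$\|\mathcal{C}\|\le \min\{\omega-1,\ 2\sigma-1\}\cdot\|\mathcal{C}^*\|.$$
   Context: All graphs are finite, simple, undirected, with no isolated vertices; $n=|V|$, $m=|E|$; $N(v)$ open neighbourhood, $N[v]=N(v)\cup\{v\}$. A clique is a vertex set inducing a complete subgraph; $\omega$ is the maximum clique size. Clique distance $\sigma:=\binom{n}{2}-m+1$. $\|\mathcal{F}\|:=\sum_{F\in\mathcal{F}}|F|$. A clique cover of $G$ is an indexed family of cliques of $G$ such that every edge lies in at least one member. First-fit greedy coloring of the complement: fix an ordering $v_1,\dots,v_n$ of $V$; process the vertices in this order and give $v_i$ the smallest positive integer $k$ such that every previously processed vertex of colour $k$ is adjacent to $v_i$ in $G$. Let $F_1,\dots,F_p$ be the colour classes. For $v\in F_k$ let $T_v:=\{\ell<k: F_\ell\cap N(v)\neq\emptyset\}$. The $\sigma$-succinct construction maintains a family $\mathcal{C}$; an edge is uncovered if it is not contained in any current member of $\mathcal{C}$. To extend a member $C$ means: while there is an uncovered edge $\{x,y\}$ with $C\subseteq N[x]\cap N[y]$, replace $C$ (inside $\mathcal{C}$) by $C\cup\{x,y\}$. Step 1: $\mathcal{C}:=\{F_\ell:|F_\ell|\ge2\}$; in an arbitrary fixed order extend each member. Step 2: in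 an arbitrary fixed order of the pairs $(v,\ell)$ with $\ell\in T_v$, let $U:=\{u\in F_\ell\cap N(v):\{u,v\}\text{ uncovered}\}$; if $U\ne\emptyset$, add $C_{v,\ell}:=U\cup\{v\}$ to $\mathcal{C}$ and extend it. The output is the final $\mathcal{C}$ (any choices allowed). *)

theory Defs
  imports Main
begin

definition graph :: "'a set \<Rightarrow> 'a set set \<Rightarrow> bool" where
  "graph V E \<longleftrightarrow> finite V \<and> (\<forall>e\<in>E. e \<subseteq> V \<and> card e = 2) \<and> (\<forall>v\<in>V. \<exists>e\<in>E. v \<in> e)"

definition nbhd :: "'a set set \<Rightarrow> 'a \<Rightarrow> 'a set" where
  "nbhd E v = {u. {u, v} \<in> E}"

definition cnbhd :: "'a set set \<Rightarrow> 'a \<Rightarrow> 'a set" where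
  "cnbhd E v = insert v (nbhd E v)"

definition is_clique :: "'a set \<Rightarrow> 'a set set \<Rightarrow> 'a set \<Rightarrow> bool" where
  "is_clique V E K \<longleftrightarrow> K \<subseteq> V \<and> (\<forall>x\<in>K. \<forall>y\<in>K. x \<noteq> y \<longrightarrow> {x, y} \<in> E)"

definition clique_number :: "'a set \<Rightarrow> 'a set set \<Rightarrow> nat" where
  "clique_number V E = Max {card K | K. is_clique V E K}"

definition clique_distance :: "'a set \<Rightarrow> 'a set set \<Rightarrow> nat" where
  "clique_distance V E = (card V choose 2) - card E + 1"

text \<open>Clique covers are indexed families, represented as lists of vertex sets.\<close>

definition is_clique_cover :: "'a set \<Rightarrow> 'a set set \<Rightarrow> 'a set list \<Rightarrow> bool" where
  "is_clique_cover V E Cs \<longleftrightarrow>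
     (\<forall>C\<in>set Cs. is_clique V E C) \<and> (\<forall>e\<in>E. \<exists>C\<in>set Cs. e \<subseteq> C)"

definition fam_size :: "'a set list \<Rightarrow> nat" where
  "fam_size Cs = sum_list (map card Cs)"

text \<open>First-fit greedy colouring of the complement along the ordering vs:
  vertex vs!i gets the least k \<ge> 1 such that every earlier vertex of colour k is adjacent to it.\<close>

definition first_fit :: "'a set set \<Rightarrow> 'a list \<Rightarrow> ('a \<Rightarrow> nat) \<Rightarrow> bool" where
  "first_fit E vs col \<longleftrightarrow>
     (\<forall>i<length vs. col (vs ! i) =
        (LEAST k. k \<ge> 1 \<and> (\<forall>j<i. col (vs ! j) = k \<longrightarrow> {vs ! j, vs ! i} \<in> E)))"

definition colour_class :: "'a set \<Rightarrow> ('a \<Rightarrow> nat) \<Rightarrow> nat \<Rightarrow> 'a set" where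
  "colour_class V col l = {v \<in> V. col v = l}"

definition Tset :: "'a set \<Rightarrow> 'a set set \<Rightarrow> ('a \<Rightarrow> nat) \<Rightarrow> 'a \<Rightarrow> nat set" where
  "Tset V E col v = {l. l < col v \<and> colour_class V col l \<inter> nbhd E v \<noteq> {}}"

definition uncovered :: "'a set list \<Rightarrow> 'a set \<Rightarrow> bool" where
  "uncovered Cs e \<longleftrightarrow> \<not> (\<exists>C\<in>set Cs. e \<subseteq> C)"

definition ext_step :: "'a set set \<Rightarrow> nat \<Rightarrow> 'a set list \<Rightarrow> 'a set list \<Rightarrow> bool" where
  "ext_step E i Cs Cs' \<longleftrightarrow> i < length Cs \<and>
     (\<exists>x y. {x, y} \<in> E \<and> uncovered Cs {x, y} \<and> Cs ! i \<subseteq> cnbhd E x \<inter> cnbhd E y \<and>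
            Cs' = Cs[i := Cs ! i \<union> {x, y}])"

definition extend :: "'a set set \<Rightarrow> nat \<Rightarrow> 'a set list \<Rightarrow> 'a set list \<Rightarrow> bool" where
  "extend E i Cs Cs' \<longleftrightarrow> (ext_step E i)\<^sup>*\<^sup>* Cs Cs' \<and> \<not> (\<exists>Cs''. ext_step E i Cs' Cs'')"

inductive ext_seq :: "'a set set \<Rightarrow> nat list \<Rightarrow> 'a set list \<Rightarrow> 'a set list \<Rightarrow> bool" where
  "ext_seq E [] Cs Cs"
| "extend E i Cs Cs1 \<Longrightarrow> ext_seq E is Cs1 Cs2 \<Longrightarrow> ext_seq E (i # is) Cs Cs2"

inductive step2 :: "'a set \<Rightarrow> 'a set set \<Rightarrow> ('a \<Rightarrow> nat) \<Rightarrow> ('a \<times> nat) list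
                     \<Rightarrow> 'a set list \<Rightarrow> 'a set list \<Rightarrow> bool" where
  "step2 V E col [] Cs Cs"
| "{u \<in> colour_class V col l \<inter> nbhd E v. uncovered Cs {u, v}} = {} \<Longrightarrow>
   step2 V E col ps Cs Cs' \<Longrightarrow> step2 V E col ((v, l) # ps) Cs Cs'"
| "U = {u \<in> colour_class V col l \<inter> nbhd E v. uncovered Cs {u, v}} \<Longrightarrow> U \<noteq> {} \<Longrightarrow>
   extend E (length Cs) (Cs @ [U \<union> {v}]) Cs1 \<Longrightarrow>
   step2 V E col ps Cs1 Cs' \<Longrightarrow> step2 V E col ((v, l) # ps) Cs Cs'"

text \<open>Cs is a possible output of the sigma-succinct construction (any ordering of V,
  any order of the step-1 members, any order of the pairs, any extension choices).\<close>

definition succinct_output :: "'a set \<Rightarrow> 'a set set \<Rightarrow> 'a set list \<Rightarrow> bool" where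
  "succinct_output V E Cs \<longleftrightarrow>
     (\<exists>vs col Cs0 Cs1 ps.
        distinct vs \<and> set vs = V \<and> first_fit E vs col \<and>
        distinct Cs0 \<and>
        set Cs0 = {F. \<exists>l. F = colour_class V col l \<and> card F \<ge> 2} \<and>
        ext_seq E [0..<length Cs0] Cs0 Cs1 \<and>
        distinct ps \<and> set ps = {(v, l). v \<in> V \<and> l \<in> Tset V E col v} \<and>
        step2 V E col ps Cs1 Cs)"

end

theory Submission
  imports Defs
begin

(* Both bounds come from charging arguments.

   For omega - 1, the family stays economical: its total size is at most twice the number of
   edges it covers. A step-1 colour class F with |F| >= 2 is a clique covering
   (|F| choose 2) >= |F|/2 edges; an extension step adds at most two vertices and newly covers
   the edge {x, y}; a step-2 member U Un {v} has |U| + 1 <= 2|U| vertices and newly covers the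
   |U| edges {u, v}. Hence ||C|| <= 2|E|, and a clique K of any clique cover covers at most
   |K| (omega - 1) / 2 edges, so 2|E| <= (omega - 1) ||C*||.

   For 2 sigma - 1: if first-fit gives v a colour above l >= 1, some earlier non-neighbour w
   of v has colour l. The map (v, l) |-> {w, v} into the sigma - 1 non-edges is injective
   because w has the smaller colour. Step 1 creates at most max col <= sigma members (the
   vertex of top colour skips all smaller colours) and step 2 at most one member per such
   pair, so |C| <= 2 sigma - 1, while each member has at most n <= ||C*|| vertices. *)

lemma graph_finite_vertices: "graph V E \<Longrightarrow> finite V"
  unfolding graph_def by simp

lemma graph_edge: "graph V E \<Longrightarrow> e \<in> E \<Longrightarrow> e \<subseteq> V \<and> card e = 2"
  unfolding graph_def by auto

lemma graph_finite_edges: "graph V E \<Longrightarrow> finite E"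
  unfolding graph_def by (meson PowI finite_Pow_iff rev_finite_subset subsetI)

definition two_subsets :: "'a set \<Rightarrow> 'a set set" where
  "two_subsets A = {e. e \<subseteq> A \<and> card e = 2}"

lemma finite_two_subsets: "finite A \<Longrightarrow> finite (two_subsets A)"
  unfolding two_subsets_def by (auto intro: finite_subset[of _ "Pow A"])

lemma card_two_subsets: "finite A \<Longrightarrow> card (two_subsets A) = card A choose 2"
  unfolding two_subsets_def by (rule n_subsets)

lemma twice_choose_two: "2 * (k choose 2) = k * (k - 1)"
proof -
  have "even (k * (k - 1))" by (cases k) auto
  then show ?thesis by (simp add: choose_two)
qed

lemma card_le_twice_card_two_subsets:
  assumes "2 \<le> card A"
  shows "card A \<le> 2 * card (two_subsets A)"
proof -
  have "1 \<le> card A - 1" using assms by linarith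
  then have "card A * 1 \<le> card A * (card A - 1)" by (rule mult_le_mono2)
  moreover have "finite A" using assms card.infinite by force
  ultimately show ?thesis by (simp add: card_two_subsets twice_choose_two)
qed

lemma two_subsets_disjoint:
  assumes "A \<inter> B = {}"
  shows "two_subsets A \<inter> two_subsets B = {}"
proof -
  have "e \<notin> two_subsets B" if e: "e \<in> two_subsets A" for e
  proof
    assume "e \<in> two_subsets B"
    then have "e = {}" using e assms unfolding two_subsets_def by blast
    then show False using e unfolding two_subsets_def by simp
  qed
  then show ?thesis by blast
qed

lemma two_subsets_clique: "is_clique V E C \<Longrightarrow> two_subsets C \<subseteq> E"
proof
  fix e assume C: "is_clique V E C" and e: "e \<in> two_subsets C"
  then have "card e = 2" and "e \<subseteq> C" unfolding two_subsets_def by simp_all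
  then obtain a b where "e = {a, b}" "a \<noteq> b" by (meson card_2_iff)
  then show "e \<in> E" using C \<open>e \<subseteq> C\<close> unfolding is_clique_def by simp
qed

definition non_edges :: "'a set \<Rightarrow> 'a set set \<Rightarrow> 'a set set" where
  "non_edges V E = two_subsets V - E"

lemma clique_distance_eq_card_non_edges:
  assumes "graph V E"
  shows "clique_distance V E = card (non_edges V E) + 1"
proof -
  have fin: "finite (two_subsets V)" using graph_finite_vertices[OF assms] by (rule finite_two_subsets)
  have sub: "E \<subseteq> two_subsets V" using graph_edge[OF assms] unfolding two_subsets_def by blast
  have "card V choose 2 = card (two_subsets V)"
    using graph_finite_vertices[OF assms] by (simp add: card_two_subsets)
  then show ?thesis
    unfolding clique_distance_def non_edges_def
    using card_Diff_subset[OF finite_subset[OF sub fin] sub] card_mono[OF fin sub] by simp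
qed

lemma card_le_clique_number:
  assumes "graph V E" and "is_clique V E K"
  shows "card K \<le> clique_number V E"
proof -
  have "{card K | K. is_clique V E K} \<subseteq> card ` Pow V" unfolding is_clique_def by auto
  then have "finite {card K | K. is_clique V E K}"
    using graph_finite_vertices[OF assms(1)] by (meson finite_Pow_iff finite_imageI finite_subset)
  then show ?thesis unfolding clique_number_def using assms(2) by (auto intro!: Max_ge)
qed

lemma sum_set_le_sum_list: "sum f (set xs) \<le> sum_list (map f xs)"
  for f :: "'b \<Rightarrow> 'c::canonically_ordered_monoid_add"
  by (induction xs) (auto simp: sum.insert_if intro: add_increasing add_left_mono)

lemma two_card_edges_le_clique_cover:
  assumes g: "graph V E" and cover: "is_clique_cover V E Cs"
  shows "2 * card E \<le> (clique_number V E - 1) * fam_size Cs"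
proof -
  have cliques: "\<And>C. C \<in> set Cs \<Longrightarrow> is_clique V E C"
    using cover unfolding is_clique_cover_def by auto
  have fin: "\<And>C. C \<in> set Cs \<Longrightarrow> finite C"
    using cliques graph_finite_vertices[OF g] unfolding is_clique_def by (meson finite_subset)
  have "E \<subseteq> (\<Union>C\<in>set Cs. two_subsets C)"
    using cover graph_edge[OF g] unfolding is_clique_cover_def two_subsets_def by blast
  then have "card E \<le> card (\<Union>C\<in>set Cs. two_subsets C)"
    by (rule card_mono[rotated]) (simp add: fin finite_two_subsets)
  also have "\<dots> \<le> (\<Sum>C\<in>set Cs. card (two_subsets C))" by (rule card_UN_le) simp
  also have "\<dots> = (\<Sum>C\<in>set Cs. card C choose 2)" by (simp add: card_two_subsets fin)
  finally have "2 * card E \<le> 2 * (\<Sum>C\<in>set Cs. card C choose 2)" by simp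
  also have "\<dots> = (\<Sum>C\<in>set Cs. card C * (card C - 1))"
    by (simp add: sum_distrib_left twice_choose_two)
  also have "\<dots> \<le> (\<Sum>C\<in>set Cs. card C * (clique_number V E - 1))"
    by (intro sum_mono mult_le_mono2 diff_le_mono card_le_clique_number[OF g cliques])
  also have "\<dots> \<le> (\<Sum>C\<leftarrow>Cs. card C * (clique_number V E - 1))" by (rule sum_set_le_sum_list)
  also have "\<dots> = (clique_number V E - 1) * fam_size Cs"
    unfolding fam_size_def by (induction Cs) (auto simp: algebra_simps)
  finally show ?thesis .
qed

lemma card_vertices_le_clique_cover:
  assumes g: "graph V E" and cover: "is_clique_cover V E Cs"
  shows "card V \<le> fam_size Cs"
proof -
  have "V \<subseteq> \<Union> (set Cs)" using cover g unfolding is_clique_cover_def graph_def by blast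
  moreover have "finite (\<Union> (set Cs))"
    using cover g unfolding is_clique_cover_def is_clique_def graph_def by (auto intro: finite_subset)
  ultimately have "card V \<le> card (\<Union> (set Cs))" by (rule card_mono[rotated])
  also have "\<dots> \<le> sum card (set Cs)" by (rule card_Union_le_sum_card)
  also have "\<dots> \<le> fam_size Cs" unfolding fam_size_def by (rule sum_set_le_sum_list)
  finally show ?thesis .
qed

lemma first_fit_colour_admissible:
  assumes ff: "first_fit E vs col" and i: "i < length vs"
  shows "1 \<le> col (vs ! i) \<and> (\<forall>j<i. col (vs ! j) = col (vs ! i) \<longrightarrow> {vs ! j, vs ! i} \<in> E)"
proof -
  let ?admissible = "\<lambda>k. 1 \<le> k \<and> (\<forall>j<i. col (vs ! j) = k \<longrightarrow> {vs ! j, vs ! i} \<in> E)"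
  have "?admissible (Suc (Max (col ` set vs)))"
  proof (intro conjI allI impI)
    fix j assume "j < i" and top: "col (vs ! j) = Suc (Max (col ` set vs))"
    then have "vs ! j \<in> set vs" using i by simp
    then have "col (vs ! j) \<le> Max (col ` set vs)" by simp
    then show "{vs ! j, vs ! i} \<in> E" using top by simp
  qed simp
  then have least: "?admissible (LEAST k. ?admissible k)" by (rule LeastI)
  have colour: "col (vs ! i) = (LEAST k. ?admissible k)"
    using ff[unfolded first_fit_def, rule_format, OF i] .
  show ?thesis unfolding colour by (rule least)
qed

lemma first_fit_skipped:
  assumes ff: "first_fit E vs col" and i: "i < length vs" and l: "1 \<le> l" "l < col (vs ! i)"
  obtains j where "j < i" "col (vs ! j) = l" "{vs ! j, vs ! i} \<notin> E"
proof -
  let ?admissible = "\<lambda>k. 1 \<le> k \<and> (\<forall>j<i. col (vs ! j) = k \<longrightarrow> {vs ! j, vs ! i} \<in> E)"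
  have "col (vs ! i) = (LEAST k. ?admissible k)" using ff[unfolded first_fit_def, rule_format, OF i] .
  then have "\<not> ?admissible l" using not_less_Least[of l ?admissible] l(2) by simp
  then show ?thesis using l(1) that by blast
qed

lemma first_fit_colour_pos:
  assumes ff: "first_fit E vs col" and v: "v \<in> set vs"
  shows "1 \<le> col v"
proof -
  obtain i where i: "i < length vs" "v = vs ! i" using v by (auto simp: in_set_conv_nth)
  show ?thesis unfolding i(2) using first_fit_colour_admissible[OF ff i(1)] by (rule conjunct1)
qed

lemma first_fit_same_colour_adjacent:
  assumes ff: "first_fit E vs col" and uv: "u \<in> set vs" "v \<in> set vs" "u \<noteq> v" "col u = col v"
  shows "{u, v} \<in> E"
proof -
  obtain i j where i: "i < length vs" "v = vs ! i" and j: "j < length vs" "u = vs ! j"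
    using uv(1,2) by (auto simp: in_set_conv_nth)
  have same: "col (vs ! j) = col (vs ! i)" using uv(4) unfolding i(2) j(2) .
  have "i \<noteq> j" using uv(3) i(2) j(2) by auto
  then consider "j < i" | "i < j" by linarith
  then show ?thesis
  proof cases
    case 1
    show ?thesis unfolding i(2) j(2)
      using conjunct2[OF first_fit_colour_admissible[OF ff i(1)], rule_format, OF 1 same] .
  next
    case 2
    have "{vs ! i, vs ! j} \<in> E"
      using conjunct2[OF first_fit_colour_admissible[OF ff j(1)], rule_format, OF 2 same[symmetric]] .
    then show ?thesis unfolding i(2) j(2) by (simp add: insert_commute)
  qed
qed

lemma first_fit_skipped_non_neighbour:
  assumes ff: "first_fit E vs col" and v: "v \<in> set vs" and l: "1 \<le> l" "l < col v"
  shows "\<exists>w\<in>set vs. col w = l \<and> {w, v} \<notin> E"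
proof -
  obtain i where i: "i < length vs" "v = vs ! i" using v by (auto simp: in_set_conv_nth)
  obtain j where j: "j < i" "col (vs ! j) = l" "{vs ! j, vs ! i} \<notin> E"
    using first_fit_skipped[OF ff i(1) l(1)] l(2) unfolding i(2) by blast
  have "vs ! j \<in> set vs" using j(1) i(1) by simp
  with j show ?thesis unfolding i(2) by blast
qed

definition skipped_colours :: "'a set \<Rightarrow> ('a \<Rightarrow> nat) \<Rightarrow> ('a \<times> nat) set" where
  "skipped_colours V col = {(v, l). v \<in> V \<and> 1 \<le> l \<and> l < col v}"

lemma finite_skipped_colours: "finite V \<Longrightarrow> finite (skipped_colours V col)"
  by (rule finite_subset[of _ "Sigma V (\<lambda>v. {..<col v})"]) (auto simp: skipped_colours_def)

lemma card_skipped_colours_le_non_edges: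
  assumes fin: "finite V"
    and blocked: "\<And>v l. v \<in> V \<Longrightarrow> 1 \<le> l \<Longrightarrow> l < col v \<Longrightarrow>
      \<exists>w\<in>V. col w = l \<and> {w, v} \<notin> E"
  shows "card (skipped_colours V col) \<le> card (non_edges V E)"
proof -
  define wit where "wit v l = (SOME w. w \<in> V \<and> col w = l \<and> {w, v} \<notin> E)" for v l
  have wit: "wit v l \<in> V \<and> col (wit v l) = l \<and> {wit v l, v} \<notin> E"
    if "(v, l) \<in> skipped_colours V col" for v l
  proof -
    have "\<exists>w. w \<in> V \<and> col w = l \<and> {w, v} \<notin> E"
      using blocked that unfolding skipped_colours_def by blast
    then show ?thesis unfolding wit_def by (rule someI_ex)
  qed
  define h where "h = (\<lambda>(v, l). {wit v l, v})"
  have "h ` skipped_colours V col \<subseteq> non_edges V E"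
  proof clarify
    fix v l assume vl: "(v, l) \<in> skipped_colours V col"
    then have "wit v l \<noteq> v" using wit[OF vl] unfolding skipped_colours_def by auto
    then show "h (v, l) \<in> non_edges V E"
      using wit[OF vl] vl unfolding h_def non_edges_def two_subsets_def skipped_colours_def by auto
  qed
  moreover have "inj_on h (skipped_colours V col)"
  proof (rule inj_onI, clarify)
    fix v l v' l'
    assume vl: "(v, l) \<in> skipped_colours V col" and vl': "(v', l') \<in> skipped_colours V col"
      and "h (v, l) = h (v', l')"
    then have eq: "{wit v l, v} = {wit v' l', v'}" unfolding h_def by simp
    have less: "l < col v" "l' < col v'" using vl vl' unfolding skipped_colours_def by auto
    have "v = v'"
    proof (rule ccontr)
      assume "v \<noteq> v'"
      then have "v = wit v' l'" "v' = wit v l" using eq by (auto simp: doubleton_eq_iff)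
      then show False using wit[OF vl] wit[OF vl'] less by simp
    qed
    then have "wit v l = wit v' l'" using eq by (auto simp: doubleton_eq_iff)
    then have "l = l'" using wit[OF vl] wit[OF vl'] by simp
    with \<open>v = v'\<close> show "v = v' \<and> l = l'" ..
  qed
  moreover have "finite (non_edges V E)"
    using fin unfolding non_edges_def by (simp add: finite_two_subsets)
  ultimately show ?thesis using card_inj_on_le by blast
qed

lemma card_colours_le_skipped_colours:
  assumes fin: "finite V" and pos: "\<forall>v\<in>V. 1 \<le> col v"
  shows "card (col ` V) \<le> card (skipped_colours V col) + 1"
proof (cases "V = {}")
  case False
  then have "Max (col ` V) \<in> col ` V" using fin by simp
  then obtain top where top: "top \<in> V" "col top = Max (col ` V)" by auto
  have "card (col ` V) \<le> card {1..col top}"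
    by (rule card_mono) (use fin pos top in auto)
  also have "\<dots> = card ({top} \<times> {1..<col top}) + 1" using pos top(1) by auto
  also have "card ({top} \<times> {1..<col top}) \<le> card (skipped_colours V col)"
    by (rule card_mono[OF finite_skipped_colours[OF fin]]) (use top(1) in \<open>auto simp: skipped_colours_def\<close>)
  finally show ?thesis by simp
qed simp

definition covered_edges :: "'a set set \<Rightarrow> 'a set list \<Rightarrow> 'a set set" where
  "covered_edges E Cs = {e \<in> E. \<not> uncovered Cs e}"

lemma covered_edges_mono:
  assumes "\<forall>C\<in>set Cs. \<exists>C'\<in>set Cs'. C \<subseteq> C'"
  shows "covered_edges E Cs \<subseteq> covered_edges E Cs'"
proof
  fix e assume "e \<in> covered_edges E Cs"
  then obtain C where e: "e \<in> E" "C \<in> set Cs" "e \<subseteq> C"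
    unfolding covered_edges_def uncovered_def by blast
  then obtain C' where "C' \<in> set Cs'" "e \<subseteq> C'" using assms by blast
  then show "e \<in> covered_edges E Cs'" using e(1) unfolding covered_edges_def uncovered_def by blast
qed

lemma finite_covered_edges: "graph V E \<Longrightarrow> finite (covered_edges E Cs)"
  unfolding covered_edges_def by (simp add: graph_finite_edges)

definition economical :: "'a set \<Rightarrow> 'a set set \<Rightarrow> 'a set list \<Rightarrow> bool" where
  "economical V E Cs \<longleftrightarrow>
     (\<forall>C\<in>set Cs. C \<subseteq> V) \<and> fam_size Cs \<le> 2 * card (covered_edges E Cs)"

lemma fam_size_le_twice_card_edges:
  assumes g: "graph V E" and ec: "economical V E Cs"
  shows "fam_size Cs \<le> 2 * card E"
proof -
  have "card (covered_edges E Cs) \<le> card E"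
    using graph_finite_edges[OF g] by (intro card_mono) (auto simp: covered_edges_def)
  then show ?thesis using ec unfolding economical_def by linarith
qed

lemma fam_size_le_length_mult_card:
  assumes "finite V" and "\<forall>C\<in>set Cs. C \<subseteq> V"
  shows "fam_size Cs \<le> length Cs * card V"
proof -
  have "fam_size Cs \<le> (\<Sum>C\<leftarrow>Cs. card V)"
    unfolding fam_size_def using assms by (auto intro!: sum_list_mono card_mono)
  then show ?thesis by (simp add: sum_list_triv)
qed

lemma economical_disjoint_cliques:
  assumes g: "graph V E" and dist: "distinct Cs"
    and cliques: "\<And>C. C \<in> set Cs \<Longrightarrow> is_clique V E C \<and> 2 \<le> card C"
    and disj: "pairwise disjnt (set Cs)"
  shows "economical V E Cs"
proof -
  have fin: "\<And>C. C \<in> set Cs \<Longrightarrow> finite C"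
    using cliques graph_finite_vertices[OF g] unfolding is_clique_def by (meson finite_subset)
  have "fam_size Cs = (\<Sum>C\<in>set Cs. card C)"
    unfolding fam_size_def using dist by (rule sum_list_distinct_conv_sum_set)
  also have "\<dots> \<le> (\<Sum>C\<in>set Cs. 2 * card (two_subsets C))"
    using cliques card_le_twice_card_two_subsets by (meson sum_mono)
  also have "\<dots> = 2 * card (\<Union>C\<in>set Cs. two_subsets C)"
  proof -
    have "two_subsets C \<inter> two_subsets C' = {}" if "C \<in> set Cs" "C' \<in> set Cs" "C \<noteq> C'" for C C'
      using disj that by (simp add: pairwise_def disjnt_def two_subsets_disjoint)
    then show ?thesis
      by (simp add: card_UN_disjoint fin finite_two_subsets sum_distrib_left)
  qed
  also have "\<dots> \<le> 2 * card (covered_edges E Cs)"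
  proof -
    have "two_subsets C \<subseteq> covered_edges E Cs" if C: "C \<in> set Cs" for C
      using two_subsets_clique[of V E C] cliques[OF C] C
      unfolding covered_edges_def uncovered_def two_subsets_def by blast
    then have "(\<Union>C\<in>set Cs. two_subsets C) \<subseteq> covered_edges E Cs" by (rule UN_least)
    then show ?thesis by (intro mult_le_mono2 card_mono finite_covered_edges[OF g])
  qed
  finally show ?thesis
    using cliques unfolding economical_def is_clique_def by simp
qed

lemma length_ext_step: "ext_step E i Cs Cs' \<Longrightarrow> length Cs' = length Cs"
  unfolding ext_step_def by auto

lemma economical_ext_step:
  assumes g: "graph V E" and step: "ext_step E i Cs Cs'" and ec: "economical V E Cs"
  shows "economical V E Cs'"
proof -
  obtain x y where xy: "{x, y} \<in> E" "uncovered Cs {x, y}" and i: "i < length Cs"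
    and Cs': "Cs' = Cs[i := Cs ! i \<union> {x, y}]"
    using step unfolding ext_step_def by blast
  have "Cs ! i \<union> {x, y} \<subseteq> V" using ec i graph_edge[OF g xy(1)] unfolding economical_def by simp
  then have members: "\<forall>C\<in>set Cs'. C \<subseteq> V"
    using ec unfolding Cs' economical_def by (auto dest: set_update_subset_insert[THEN subsetD])
  have "card {x, y} \<le> 2" by (simp add: card_insert_if)
  then have "card (Cs ! i \<union> {x, y}) \<le> card (Cs ! i) + 2"
    using card_Un_le[of "Cs ! i" "{x, y}"] by linarith
  moreover have "fam_size Cs' = fam_size Cs + card (Cs ! i \<union> {x, y}) - card (Cs ! i)"
    unfolding fam_size_def Cs' using i by (simp add: map_update sum_list_update)
  ultimately have size: "fam_size Cs' \<le> fam_size Cs + 2" by linarith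
  have "\<forall>C\<in>set Cs. \<exists>C'\<in>set Cs'. C \<subseteq> C'"
  proof
    fix C assume "C \<in> set Cs"
    then obtain j where j: "j < length Cs" "C = Cs ! j" by (auto simp: in_set_conv_nth)
    have "Cs' ! j \<in> set Cs'" using j(1) unfolding Cs' by simp
    moreover have "C \<subseteq> Cs' ! j" using j unfolding Cs' by (cases "i = j") auto
    ultimately show "\<exists>C'\<in>set Cs'. C \<subseteq> C'" by blast
  qed
  then have "covered_edges E Cs \<subseteq> covered_edges E Cs'" by (rule covered_edges_mono)
  moreover have "{x, y} \<in> covered_edges E Cs'"
  proof -
    have "Cs ! i \<union> {x, y} \<in> set Cs'" unfolding Cs' using i by (rule set_update_memI)
    then show ?thesis using xy(1) unfolding covered_edges_def uncovered_def by blast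
  qed
  ultimately have "card (insert {x, y} (covered_edges E Cs)) \<le> card (covered_edges E Cs')"
    by (intro card_mono finite_covered_edges[OF g]) simp
  moreover have "{x, y} \<notin> covered_edges E Cs" using xy(2) unfolding covered_edges_def by simp
  ultimately have "card (covered_edges E Cs) + 1 \<le> card (covered_edges E Cs')"
    using finite_covered_edges[OF g] by simp
  then show ?thesis using members size ec unfolding economical_def by linarith
qed

lemma length_extend:
  assumes "extend E i Cs Cs'"
  shows "length Cs' = length Cs"
proof -
  have "(ext_step E i)\<^sup>*\<^sup>* Cs Cs'" using assms unfolding extend_def by blast
  then show ?thesis by (induction rule: rtranclp_induct) (auto dest: length_ext_step)
qed

lemma economical_extend:
  assumes g: "graph V E" and ext: "extend E i Cs Cs'" and ec: "economical V E Cs"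
  shows "economical V E Cs'"
proof -
  have "(ext_step E i)\<^sup>*\<^sup>* Cs Cs'" using ext unfolding extend_def by blast
  then show ?thesis
    by (induction rule: rtranclp_induct) (auto intro: ec economical_ext_step[OF g])
qed

lemma length_ext_seq: "ext_seq E is Cs Cs' \<Longrightarrow> length Cs' = length Cs"
  by (induction rule: ext_seq.induct) (auto dest: length_extend)

lemma economical_ext_seq:
  "ext_seq E is Cs Cs' \<Longrightarrow> graph V E \<Longrightarrow> economical V E Cs \<Longrightarrow> economical V E Cs'"
  by (induction rule: ext_seq.induct) (auto intro: economical_extend)

lemma economical_append_star:
  assumes g: "graph V E" and ec: "economical V E Cs" and U: "U \<noteq> {}"
    and star: "\<And>u. u \<in> U \<Longrightarrow> {u, v} \<in> E \<and> uncovered Cs {u, v}"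
  shows "economical V E (Cs @ [U \<union> {v}])"
proof -
  have "{u, v} \<subseteq> V" if "u \<in> U" for u using graph_edge[OF g] star[OF that] by blast
  then have UV: "U \<union> {v} \<subseteq> V" using U by blast
  then have members: "\<forall>C\<in>set (Cs @ [U \<union> {v}]). C \<subseteq> V" using ec unfolding economical_def by simp
  have finU: "finite U" using UV graph_finite_vertices[OF g] by (meson Un_subset_iff rev_finite_subset)
  have "fam_size (Cs @ [U \<union> {v}]) \<le> fam_size Cs + card U + 1"
    unfolding fam_size_def using card_Un_le[of U "{v}"] by simp
  moreover have "1 \<le> card U" using finU U by (simp add: Suc_leI card_gt_0_iff)
  moreover have "card U + card (covered_edges E Cs) \<le> card (covered_edges E (Cs @ [U \<union> {v}]))"
  proof -
    define spokes where "spokes = (\<lambda>u. {u, v}) ` U"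
    have "card spokes = card U"
      unfolding spokes_def by (rule card_image) (auto simp: inj_on_def doubleton_eq_iff)
    moreover have "spokes \<inter> covered_edges E Cs = {}"
      using star unfolding spokes_def covered_edges_def by auto
    moreover have "finite spokes" unfolding spokes_def using finU by simp
    ultimately have "card (spokes \<union> covered_edges E Cs) = card U + card (covered_edges E Cs)"
      using card_Un_disjoint[OF _ finite_covered_edges[OF g]] by simp
    moreover have "spokes \<union> covered_edges E Cs \<subseteq> covered_edges E (Cs @ [U \<union> {v}])"
      using star unfolding spokes_def covered_edges_def uncovered_def by auto
    ultimately show ?thesis using card_mono[OF finite_covered_edges[OF g]] by metis
  qed
  ultimately show ?thesis using members ec unfolding economical_def by linarith
qed

lemma length_step2: "step2 V E col ps Cs Cs' \<Longrightarrow> length Cs' \<le> length Cs + length ps"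
  by (induction rule: step2.induct) (auto dest: length_extend)

lemma economical_step2:
  "step2 V E col ps Cs Cs' \<Longrightarrow> graph V E \<Longrightarrow> economical V E Cs \<Longrightarrow> economical V E Cs'"
proof (induction rule: step2.induct)
  case (3 U V col l E v Cs Cs1 ps Cs')
  have star: "\<And>u. u \<in> U \<Longrightarrow> {u, v} \<in> E \<and> uncovered Cs {u, v}"
    using "3.hyps"(1) unfolding nbhd_def by blast
  have "economical V E (Cs @ [U \<union> {v}])"
    using economical_append_star[OF "3.prems" "3.hyps"(2) star] .
  then have "economical V E Cs1" by (rule economical_extend[OF "3.prems"(1) "3.hyps"(3)])
  then show ?case using "3.IH" "3.prems"(1) by blast
qed simp_all

lemma succinct_output_economical:
  assumes g: "graph V E" and out: "succinct_output V E Cs"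
  shows "economical V E Cs"
proof -
  obtain vs col Cs0 Cs1 ps where "distinct vs" and vs: "set vs = V" and ff: "first_fit E vs col"
    and dist: "distinct Cs0" and Cs0: "set Cs0 = {F. \<exists>l. F = colour_class V col l \<and> card F \<ge> 2}"
    and seq: "ext_seq E [0..<length Cs0] Cs0 Cs1"
    and "distinct ps" and "set ps = {(v, l). v \<in> V \<and> l \<in> Tset V E col v}"
    and s2: "step2 V E col ps Cs1 Cs"
    using out unfolding succinct_output_def by (elim exE conjE) (rule that; assumption)
  have "economical V E Cs0"
  proof (rule economical_disjoint_cliques[OF g dist])
    fix C assume "C \<in> set Cs0"
    then obtain l where C: "C = colour_class V col l" "2 \<le> card C" unfolding Cs0 by blast
    have "is_clique V E C" unfolding is_clique_def
    proof (intro conjI ballI impI)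
      show "C \<subseteq> V" unfolding C(1) colour_class_def by blast
      fix x y assume "x \<in> C" "y \<in> C" "x \<noteq> y"
      moreover from \<open>x \<in> C\<close> \<open>y \<in> C\<close> have "x \<in> set vs" "y \<in> set vs" "col x = col y"
        unfolding vs C(1) colour_class_def by simp_all
      ultimately show "{x, y} \<in> E" using first_fit_same_colour_adjacent[OF ff] by blast
    qed
    then show "is_clique V E C \<and> 2 \<le> card C" using C(2) by simp
  next
    show "pairwise disjnt (set Cs0)"
    proof (rule pairwiseI)
      fix F F' assume F: "F \<in> set Cs0" and F': "F' \<in> set Cs0" and "F \<noteq> F'"
      moreover obtain l where "F = colour_class V col l" using F unfolding Cs0 by blast
      moreover obtain l' where "F' = colour_class V col l'" using F' unfolding Cs0 by blast
      ultimately show "disjnt F F'" unfolding disjnt_def colour_class_def by auto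
    qed
  qed
  then have "economical V E Cs1" using economical_ext_seq[OF seq g] by simp
  then show ?thesis using economical_step2[OF s2 g] by simp
qed

lemma card_large_colour_classes:
  assumes "finite V"
  shows "card {F. \<exists>l. F = colour_class V col l \<and> card F \<ge> 2} \<le> card (col ` V)"
proof -
  have "{F. \<exists>l. F = colour_class V col l \<and> card F \<ge> 2} \<subseteq> colour_class V col ` col ` V"
  proof clarify
    fix l assume "2 \<le> card (colour_class V col l)"
    then obtain u where "u \<in> colour_class V col l" by fastforce
    then have "u \<in> V" "l = col u" unfolding colour_class_def by simp_all
    then show "colour_class V col l \<in> colour_class V col ` col ` V" by blast
  qed
  then have "card {F. \<exists>l. F = colour_class V col l \<and> card F \<ge> 2} \<le> card (colour_class V col ` col ` V)"
    by (rule card_mono[rotated]) (simp add: assms)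
  also have "\<dots> \<le> card (col ` V)" by (rule card_image_le) (simp add: assms)
  finally show ?thesis .
qed

lemma Tset_pairs_subset_skipped_colours:
  assumes pos: "\<forall>v\<in>V. 1 \<le> col v"
  shows "{(v, l). v \<in> V \<and> l \<in> Tset V E col v} \<subseteq> skipped_colours V col"
proof clarify
  fix v l assume "v \<in> V" "l \<in> Tset V E col v"
  then have "v \<in> V" "l < col v" "\<exists>u\<in>V. col u = l" unfolding Tset_def colour_class_def by auto
  then show "(v, l) \<in> skipped_colours V col" using pos unfolding skipped_colours_def by auto
qed

lemma length_succinct_output:
  assumes g: "graph V E" and out: "succinct_output V E Cs"
  shows "length Cs \<le> 2 * card (non_edges V E) + 1"
proof -
  obtain vs col Cs0 Cs1 ps where "distinct vs" and vs: "set vs = V" and ff: "first_fit E vs col"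
    and dist: "distinct Cs0" and Cs0: "set Cs0 = {F. \<exists>l. F = colour_class V col l \<and> card F \<ge> 2}"
    and seq: "ext_seq E [0..<length Cs0] Cs0 Cs1"
    and dist_ps: "distinct ps" and ps: "set ps = {(v, l). v \<in> V \<and> l \<in> Tset V E col v}"
    and s2: "step2 V E col ps Cs1 Cs"
    using out unfolding succinct_output_def by (elim exE conjE) (rule that; assumption)
  have fin: "finite V" using g by (rule graph_finite_vertices)
  have pos: "\<forall>v\<in>V. 1 \<le> col v" using first_fit_colour_pos[OF ff] unfolding vs by blast
  have skipped: "card (skipped_colours V col) \<le> card (non_edges V E)"
    by (rule card_skipped_colours_le_non_edges[OF fin first_fit_skipped_non_neighbour[OF ff, unfolded vs]])
  have "length Cs0 = card (set Cs0)" using distinct_card[OF dist] by simp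
  also have "\<dots> \<le> card (col ` V)" unfolding Cs0 by (rule card_large_colour_classes[OF fin])
  also have "\<dots> \<le> card (skipped_colours V col) + 1"
    by (rule card_colours_le_skipped_colours[OF fin pos])
  finally have step1_members: "length Cs0 \<le> card (skipped_colours V col) + 1" .
  have "set ps \<subseteq> skipped_colours V col" unfolding ps by (rule Tset_pairs_subset_skipped_colours[OF pos])
  then have "card (set ps) \<le> card (skipped_colours V col)"
    by (rule card_mono[OF finite_skipped_colours[OF fin]])
  then have step2_members: "length ps \<le> card (skipped_colours V col)"
    using distinct_card[OF dist_ps] by simp
  have "length Cs \<le> length Cs0 + length ps"
    using length_step2[OF s2] length_ext_seq[OF seq] by simp
  then show ?thesis using step1_members step2_members skipped by linarith
qed

theorem mainTheorem6:
  fixes V :: "'a set" and E :: "'a set set" and Cstar Cs :: "'a set list"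
  assumes "graph V E"
    and "E \<noteq> {}"
    and "is_clique_cover V E Cstar"
    and "\<forall>Cs'. is_clique_cover V E Cs' \<longrightarrow> fam_size Cstar \<le> fam_size Cs'"
    and "succinct_output V E Cs"
  shows "fam_size Cs \<le>
           min (clique_number V E - 1) (2 * clique_distance V E - 1) * fam_size Cstar"
proof -
  note g = assms(1) and cover = assms(3) and out = assms(5)
  have ec: "economical V E Cs" by (rule succinct_output_economical[OF g out])
  have "fam_size Cs \<le> 2 * card E" by (rule fam_size_le_twice_card_edges[OF g ec])
  also have "\<dots> \<le> (clique_number V E - 1) * fam_size Cstar"
    by (rule two_card_edges_le_clique_cover[OF g cover])
  finally have by_omega: "fam_size Cs \<le> (clique_number V E - 1) * fam_size Cstar" .
  have "fam_size Cs \<le> length Cs * card V"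
    using graph_finite_vertices[OF g] ec unfolding economical_def by (simp add: fam_size_le_length_mult_card)
  also have "\<dots> \<le> (2 * card (non_edges V E) + 1) * fam_size Cstar"
    using length_succinct_output[OF g out] card_vertices_le_clique_cover[OF g cover]
    by (rule mult_le_mono)
  also have "2 * card (non_edges V E) + 1 = 2 * clique_distance V E - 1"
    unfolding clique_distance_eq_card_non_edges[OF g] by simp
  finally have by_sigma: "fam_size Cs \<le> (2 * clique_distance V E - 1) * fam_size Cstar" .
  show ?thesis using by_omega by_sigma by (simp add: min_def)
qed

end
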